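(* Let $(Y,\mathfrak{T})$ be a fuzzy topological space and let $\mathcal{P},\mathcal{G}$ be fuzzy primals on $Y$. Then $\mathfrak{T}^\diamond_{\mathcal{P}\cup\mathcal{G}}=\mathfrak{T}^\diamond_{\mathcal{P}}\cap\mathfrak{T}^\diamond_{\mathcal{G}}$.
   Context: Let $Y$ be a nonempty set and $\mathbb{I}=[0,1]$. A fuzzy set in $Y$ is a map $Y\to\mathbb{I}$; $\mathbb{I}^Y$ is the set of all fuzzy sets; $0_Y,1_Y$ are the constant maps with values $0,1$; $\mu\subseteq\nu$ means $\mu(y)\le\nu(y)$ for all $y$; unions/intersections are pointwise sup/inf; $\bar\mu=1_Y-\mu$. For $\mu,\nu\in\mathbb{I}^Y$, $(\mu\oplus\nu)(y)=\min(\mu(y)+\nu(y),1)$. A fuzzy point $y_t$ ($y\in Y$, $t\in(0,1]$) is the fuzzy set with value $t$ at $y$ and $0$ elsewhere; $y_t\in\mu$ means $t\le\mu(y)$. We write $y_t\prec\mu$ if $t+\mu(y)>1$. A set $F$ of fuzzy points is identified with the fuzzy set $y\mapsto\sup\{t: y_t\in F\}$ (with $\sup\emptyset=0$). A fuzzy topology on $Y$ is a family $\mathfrak{T}\subseteq\mathbb{I}^Y$ containing $0_Y,1_Y$ and closed under finite intersections and arbitrary unions. For a fuzzy point $y_t$, $\mathcal{Q}(y_t)=\{\mu\in\mathfrak{T}: y_t\prec\mu\}$. A fuzzy primal on $Y$ is a family $\mathcal{P}\subseteq\mathbb{I}^Y$ such that: (i) $1_Y\notin\mathcal{P}$; (ii)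 if $\mu\in\mathcal{P}$ and $\nu\subseteq\mu$ then $\nu\in\mathcal{P}$; (iii) if $\mu\cap\nu\in\mathcal{P}$ then $\mu\in\mathcal{P}$ or $\nu\in\mathcal{P}$. (The union of two fuzzy primals is a fuzzy primal.) For a fuzzy primal $\mathcal{P}$ and $\lambda\in\mathbb{I}^Y$, $\lambda^\diamond_{\mathcal{P}}$ is the set of fuzzy points $y_t$ such that $\bar{\lambda}\oplus\bar{\mu}\in\mathcal{P}$ for every $\mu\in\mathcal{Q}(y_t)$; $Cl^\diamond_{\mathcal{P}}(\lambda)=\lambda\cup\lambda^\diamond_{\mathcal{P}}$; and $\mathfrak{T}^\diamond_{\mathcal{P}}=\{\mu\in\mathbb{I}^Y: Cl^\diamond_{\mathcal{P}}(\bar{\mu})=\bar{\mu}\}$. *)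

theory Defs
  imports "HOL-Analysis.Analysis"
begin

text \<open>Fuzzy sets on the ground type 'a (the set Y = UNIV, nonempty) are maps into the
  real interval [0,1].\<close>

definition fuzzy_sets :: "('a \<Rightarrow> real) set" where
  "fuzzy_sets = {\<mu>. \<forall>y. 0 \<le> \<mu> y \<and> \<mu> y \<le> 1}"

definition fcompl :: "('a \<Rightarrow> real) \<Rightarrow> 'a \<Rightarrow> real" where
  "fcompl \<mu> = (\<lambda>y. 1 - \<mu> y)"

definition fplus :: "('a \<Rightarrow> real) \<Rightarrow> ('a \<Rightarrow> real) \<Rightarrow> 'a \<Rightarrow> real" where
  "fplus \<mu> \<nu> = (\<lambda>y. min (\<mu> y + \<nu> y) 1)"

definition fuzzy_topology :: "('a \<Rightarrow> real) set \<Rightarrow> bool" where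
  "fuzzy_topology T \<longleftrightarrow> T \<subseteq> fuzzy_sets \<and> (\<lambda>_. 0) \<in> T \<and> (\<lambda>_. 1) \<in> T
     \<and> (\<forall>\<mu>\<in>T. \<forall>\<nu>\<in>T. (\<lambda>y. min (\<mu> y) (\<nu> y)) \<in> T)
     \<and> (\<forall>S\<subseteq>T. (\<lambda>y. if S = {} then 0 else Sup ((\<lambda>\<mu>. \<mu> y) ` S)) \<in> T)"

definition fuzzy_primal :: "('a \<Rightarrow> real) set \<Rightarrow> bool" where
  "fuzzy_primal P \<longleftrightarrow> P \<subseteq> fuzzy_sets \<and> (\<lambda>_. 1) \<notin> P
     \<and> (\<forall>\<mu>\<in>P. \<forall>\<nu>\<in>fuzzy_sets. (\<forall>y. \<nu> y \<le> \<mu> y) \<longrightarrow> \<nu> \<in> P)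
     \<and> (\<forall>\<mu>\<in>fuzzy_sets. \<forall>\<nu>\<in>fuzzy_sets. (\<lambda>y. min (\<mu> y) (\<nu> y)) \<in> P \<longrightarrow> \<mu> \<in> P \<or> \<nu> \<in> P)"

definition qcoinc :: "'a \<Rightarrow> real \<Rightarrow> ('a \<Rightarrow> real) \<Rightarrow> bool" where
  "qcoinc y t \<mu> \<longleftrightarrow> t + \<mu> y > 1"

definition Qnbhd :: "('a \<Rightarrow> real) set \<Rightarrow> 'a \<Rightarrow> real \<Rightarrow> ('a \<Rightarrow> real) set" where
  "Qnbhd T y t = {\<mu>\<in>T. qcoinc y t \<mu>}"

text \<open>lambda^diamond as a set of fuzzy points (pairs (y,t) with 0 < t \<le> 1).\<close>

definition diamond_pts :: "('a \<Rightarrow> real) set \<Rightarrow> ('a \<Rightarrow> real) set \<Rightarrow> ('a \<Rightarrow> real) \<Rightarrow> ('a \<times> real) set" where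
  "diamond_pts T P lam = {(y,t). 0 < t \<and> t \<le> 1 \<and>
      (\<forall>\<mu>\<in>Qnbhd T y t. fplus (fcompl lam) (fcompl \<mu>) \<in> P)}"

text \<open>A set of fuzzy points identified with the fuzzy set y \<mapsto> sup {t. y_t \<in> F} (sup of empty = 0).\<close>

definition pts_to_fuzzy :: "('a \<times> real) set \<Rightarrow> 'a \<Rightarrow> real" where
  "pts_to_fuzzy F = (\<lambda>y. if {t. (y,t) \<in> F} = {} then 0 else Sup {t. (y,t) \<in> F})"

definition diamond :: "('a \<Rightarrow> real) set \<Rightarrow> ('a \<Rightarrow> real) set \<Rightarrow> ('a \<Rightarrow> real) \<Rightarrow> 'a \<Rightarrow> real" where
  "diamond T P lam = pts_to_fuzzy (diamond_pts T P lam)"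

definition cl_diamond :: "('a \<Rightarrow> real) set \<Rightarrow> ('a \<Rightarrow> real) set \<Rightarrow> ('a \<Rightarrow> real) \<Rightarrow> 'a \<Rightarrow> real" where
  "cl_diamond T P lam = (\<lambda>y. max (lam y) (diamond T P lam y))"

definition T_diamond :: "('a \<Rightarrow> real) set \<Rightarrow> ('a \<Rightarrow> real) set \<Rightarrow> ('a \<Rightarrow> real) set" where
  "T_diamond T P = {\<mu>\<in>fuzzy_sets. cl_diamond T P (fcompl \<mu>) = fcompl \<mu>}"

end

theory Submission
  imports Defs
begin

text \<open>A fuzzy point lies in the diamond of \<open>P \<union> G\<close> exactly when it lies in the diamond
  of \<open>P\<close> or of \<open>G\<close>: if quasi-neighbourhoods \<open>\<mu>\<^sub>1\<close>, \<open>\<mu>\<^sub>2\<close> witness that it lies in neither, then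
  so does \<open>\<mu>\<^sub>1 \<inter> \<mu>\<^sub>2\<close>, because \<open>\<mu> \<mapsto> \<lambda>\<^sup>c \<oplus> \<mu>\<^sup>c\<close> is antitone and primals are hereditary.
  Passing from point sets to fuzzy sets turns this union into a pointwise maximum, so a fuzzy
  set is closed for the diamond closure of \<open>P \<union> G\<close> iff it is closed for both.\<close>

lemma fcompl_in_fuzzy_sets: "\<mu> \<in> fuzzy_sets \<Longrightarrow> fcompl \<mu> \<in> fuzzy_sets"
  by (auto simp: fuzzy_sets_def fcompl_def)

lemma fplus_in_fuzzy_sets: "\<mu> \<in> fuzzy_sets \<Longrightarrow> \<nu> \<in> fuzzy_sets \<Longrightarrow> fplus \<mu> \<nu> \<in> fuzzy_sets"
  by (auto simp: fuzzy_sets_def fplus_def)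

lemma fplus_fcompl_antimono: "\<nu> \<le> \<mu> \<Longrightarrow> fplus lam (fcompl \<mu>) \<le> fplus lam (fcompl \<nu>)"
  unfolding le_fun_def fplus_def fcompl_def by (smt (verit) min.mono)

lemma fuzzy_primal_downward_closed:
  "fuzzy_primal P \<Longrightarrow> \<mu> \<in> P \<Longrightarrow> \<nu> \<in> fuzzy_sets \<Longrightarrow> \<nu> \<le> \<mu> \<Longrightarrow> \<nu> \<in> P"
  unfolding fuzzy_primal_def le_fun_def by blast

lemma Qnbhd_inter:
  assumes "fuzzy_topology T" "\<mu> \<in> Qnbhd T y t" "\<nu> \<in> Qnbhd T y t"
  shows "(\<lambda>z. min (\<mu> z) (\<nu> z)) \<in> Qnbhd T y t"
  using assms by (auto simp: fuzzy_topology_def Qnbhd_def qcoinc_def)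

lemma Qnbhd_subset_fuzzy_sets: "fuzzy_topology T \<Longrightarrow> Qnbhd T y t \<subseteq> fuzzy_sets"
  by (auto simp: fuzzy_topology_def Qnbhd_def)

lemma diamond_pts_union:
  assumes T: "fuzzy_topology T" and "fuzzy_primal P" "fuzzy_primal G"
    and lam: "lam \<in> fuzzy_sets"
  shows "diamond_pts T (P \<union> G) lam = diamond_pts T P lam \<union> diamond_pts T G lam"
proof
  show "diamond_pts T P lam \<union> diamond_pts T G lam \<subseteq> diamond_pts T (P \<union> G) lam"
    by (auto simp: diamond_pts_def)
next
  let ?f = "\<lambda>\<mu>. fplus (fcompl lam) (fcompl \<mu>)"
  have in_primal_of_inter: "?f \<mu> \<in> P" if "fuzzy_primal P" "\<mu> \<in> Qnbhd T y t" "\<nu> \<in> Qnbhd T y t"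
    "?f (\<lambda>z. min (\<mu> z) (\<nu> z)) \<in> P" for P \<mu> \<nu> y t
  proof (rule fuzzy_primal_downward_closed[OF that(1,4)])
    show "?f \<mu> \<in> fuzzy_sets"
      using Qnbhd_subset_fuzzy_sets[OF T] that(2) lam
      by (blast intro: fplus_in_fuzzy_sets fcompl_in_fuzzy_sets)
    show "?f \<mu> \<le> ?f (\<lambda>z. min (\<mu> z) (\<nu> z))"
      by (rule fplus_fcompl_antimono) (simp add: le_fun_def)
  qed
  show "diamond_pts T (P \<union> G) lam \<subseteq> diamond_pts T P lam \<union> diamond_pts T G lam"
  proof (rule subsetI, rule ccontr)
    fix p assume p_union: "p \<in> diamond_pts T (P \<union> G) lam"
      and p_neither: "p \<notin> diamond_pts T P lam \<union> diamond_pts T G lam"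
    obtain y t where p: "p = (y, t)" by fastforce
    from p_neither p_union p obtain \<mu>\<^sub>1 \<mu>\<^sub>2
      where \<mu>\<^sub>1: "\<mu>\<^sub>1 \<in> Qnbhd T y t" "?f \<mu>\<^sub>1 \<notin> P"
        and \<mu>\<^sub>2: "\<mu>\<^sub>2 \<in> Qnbhd T y t" "?f \<mu>\<^sub>2 \<notin> G"
      by (auto simp: diamond_pts_def)
    have "(\<lambda>z. min (\<mu>\<^sub>1 z) (\<mu>\<^sub>2 z)) \<in> Qnbhd T y t"
      using Qnbhd_inter[OF T \<mu>\<^sub>1(1) \<mu>\<^sub>2(1)] .
    with p_union p have "?f (\<lambda>z. min (\<mu>\<^sub>1 z) (\<mu>\<^sub>2 z)) \<in> P \<union> G"
      by (auto simp: diamond_pts_def)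
    moreover have "(\<lambda>z. min (\<mu>\<^sub>1 z) (\<mu>\<^sub>2 z)) = (\<lambda>z. min (\<mu>\<^sub>2 z) (\<mu>\<^sub>1 z))"
      by (simp add: min.commute)
    ultimately show False
      using in_primal_of_inter[OF \<open>fuzzy_primal P\<close> \<mu>\<^sub>1(1) \<mu>\<^sub>2(1)] in_primal_of_inter[OF \<open>fuzzy_primal G\<close> \<mu>\<^sub>2(1) \<mu>\<^sub>1(1)]
        \<mu>\<^sub>1(2) \<mu>\<^sub>2(2)
      by auto
  qed
qed

lemma Sup_union_nonneg:
  fixes S S' :: "real set"
  assumes "S \<subseteq> {0..}" "bdd_above S" "S' \<subseteq> {0..}" "bdd_above S'"
  shows "(if S \<union> S' = {} then 0 else Sup (S \<union> S'))
    = max (if S = {} then 0 else Sup S) (if S' = {} then 0 else Sup S')"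
proof -
  have Sup_nonneg: "0 \<le> Sup X" if "X \<subseteq> {0..}" "bdd_above X" "X \<noteq> {}" for X :: "real set"
    using that by (meson atLeast_iff cSup_upper ex_in_conv order.trans subsetD)
  show ?thesis
    using assms Sup_nonneg[of S] Sup_nonneg[of S']
    by (cases "S = {}"; cases "S' = {}") (simp_all add: cSup_union_distrib sup_max max_def)
qed

lemma pts_to_fuzzy_union:
  assumes A: "A \<subseteq> UNIV \<times> {0..1}" and B: "B \<subseteq> UNIV \<times> {0..1}"
  shows "pts_to_fuzzy (A \<union> B) = sup (pts_to_fuzzy A) (pts_to_fuzzy B)"
proof
  fix y :: 'a
  have fibre: "{t. (y, t) \<in> F} \<subseteq> {0..}" "bdd_above {t. (y, t) \<in> F}"
    if "F \<subseteq> UNIV \<times> {0..1}" for F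
    using that by (force intro: bdd_aboveI[of _ 1])+
  have "{t. (y, t) \<in> A \<union> B} = {t. (y, t) \<in> A} \<union> {t. (y, t) \<in> B}" by auto
  then show "pts_to_fuzzy (A \<union> B) y = sup (pts_to_fuzzy A) (pts_to_fuzzy B) y"
    unfolding pts_to_fuzzy_def sup_fun_def sup_max
    by (simp only: Sup_union_nonneg[OF fibre[OF A] fibre[OF B]])
qed

lemma diamond_pts_subset: "diamond_pts T P lam \<subseteq> UNIV \<times> {0..1}"
  by (auto simp: diamond_pts_def)

lemma diamond_union:
  assumes "fuzzy_topology T" "fuzzy_primal P" "fuzzy_primal G" "lam \<in> fuzzy_sets"
  shows "diamond T (P \<union> G) lam = sup (diamond T P lam) (diamond T G lam)"
  unfolding diamond_def diamond_pts_union[OF assms]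
  by (intro pts_to_fuzzy_union diamond_pts_subset)

lemma cl_diamond_eq_iff: "cl_diamond T P lam = lam \<longleftrightarrow> diamond T P lam \<le> lam"
  unfolding cl_diamond_def fun_eq_iff le_fun_def by (metis max.absorb_iff1)

theorem theorem4p11:
  fixes T P G :: "('a \<Rightarrow> real) set"
  assumes "fuzzy_topology T" and "fuzzy_primal P" and "fuzzy_primal G"
  shows "T_diamond T (P \<union> G) = T_diamond T P \<inter> T_diamond T G"
  unfolding T_diamond_def cl_diamond_eq_iff
  using diamond_union[OF assms fcompl_in_fuzzy_sets] by auto

end
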